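(* Let $k\in\mathbb{P}$ and let $b\geq 2$ be an integer. Then the sequence $B=\left(1,\frac{b^2-1}{b-1},\dots,\frac{b^k-1}{b-1}\right)$ is orderly, i.e., $opt_B(M)=grd_B(M)$ for all $M\in\mathbb{P}$.
   Context: $\mathbb{P}$ denotes the positive integers and $\mathbb{N}$ the nonnegative integers. For a sequence $B=(b_1,\dots,b_k)$ of positive integers with $1=b_1<b_2<\cdots<b_k$ and $M\in\mathbb{N}$, $opt_B(M)=\min\{\sum_{i=1}^k x_i : \sum_{i=1}^k b_i x_i=M,\ x_i\in\mathbb{N}\}$. $grd_B(M)$ denotes the number of parts used by the greedy strategy: take as many copies of $b_k$ as possible (without exceeding $M$), then as many copies of $b_{k-1}$ as possible for the remainder, and so on down to $b_1=1$. $B$ is called orderly if $opt_B(M)=grd_B(M)$ for all $M>0$. *)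

theory Defs
  imports Main
begin

text \<open>A coin system B is a list [b_1,...,b_k] of positive integers, 1 = b_1 < ... < b_k.\<close>

definition opt_B :: "nat list \<Rightarrow> nat \<Rightarrow> nat" where
  "opt_B B M = (LEAST s. \<exists>x::nat list. length x = length B \<and>
      (\<Sum>i<length B. B ! i * x ! i) = M \<and> (\<Sum>i<length B. x ! i) = s)"

fun grd_desc :: "nat list \<Rightarrow> nat \<Rightarrow> nat" where
  "grd_desc [] M = 0"
| "grd_desc (c # cs) M = M div c + grd_desc cs (M mod c)"

definition grd_B :: "nat list \<Rightarrow> nat \<Rightarrow> nat" where
  "grd_B B M = grd_desc (rev B) M"

definition orderly :: "nat list \<Rightarrow> bool" where
  "orderly B \<longleftrightarrow> (\<forall>M>0. opt_B B M = grd_B B M)"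

end

theory Submission
  imports Defs
begin

text \<open>
Write \<open>r i = 1 + b + \<dots> + b ^ i\<close>, so that \<open>r (i + 1) = b * r i + 1\<close>, and let \<open>G j\<close> be
the greedy count with the coins \<open>r 0, \<dots>, r (j - 1)\<close>. The greedy solution is always a
representation, so it suffices that no representation uses fewer coins. Since
\<open>r i - 1 = b * r (i - 1)\<close> costs at most \<open>b\<close> greedy coins, \<open>G j m \<le> G j (m + 1) + b - 1\<close>;
together with \<open>r j = b * r (j - 1) + 1\<close> this gives \<open>G j N + 1 \<le> G j (N + r j)\<close>: a copy
of the coin \<open>r j\<close> is never worth less than one greedy coin among the smaller ones.
Induction on the number of coin values then shows that the greedy count is a lower
bound for every representation.
\<close>

fun greedy :: "(nat \<Rightarrow> nat) \<Rightarrow> nat \<Rightarrow> nat \<Rightarrow> nat" where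
  "greedy c 0 M = 0"
| "greedy c (Suc j) M = M div c j + greedy c j (M mod c j)"

lemma grd_B_map_upt: "grd_B (map c [0..<k]) M = greedy c k M"
  unfolding grd_B_def by (induction k arbitrary: M) simp_all

lemma greedy_zero [simp]: "greedy c j 0 = 0"
  by (induction j) simp_all

lemma greedy_representation:
  assumes "c 0 = 1" and "0 < k"
  shows "\<exists>x. (\<Sum>i<k. c i * x i) = M \<and> (\<Sum>i<k. x i) = greedy c k M"
  using \<open>0 < k\<close>
proof (induction k arbitrary: M)
  case 0
  then show ?case by simp
next
  case (Suc j)
  show ?case
  proof (cases j)
    case 0
    show ?thesis by (rule exI[of _ "\<lambda>_. M"]) (simp add: 0 assms(1))
  next
    case (Suc _)
    then obtain x where x: "(\<Sum>i<j. c i * x i) = M mod c j" "(\<Sum>i<j. x i) = greedy c j (M mod c j)"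
      using Suc.IH by blast
    let ?y = "x(j := M div c j)"
    have "(\<Sum>i<j. c i * ?y i) = (\<Sum>i<j. c i * x i)" "(\<Sum>i<j. ?y i) = (\<Sum>i<j. x i)"
      by (auto intro: sum.cong)
    with x show ?thesis
      by (intro exI[of _ ?y]) (simp add: mult.commute)
  qed
qed

lemma opt_B_map_upt:
  "opt_B (map c [0..<k]) M = (LEAST s. \<exists>x. (\<Sum>i<k. c i * x i) = M \<and> (\<Sum>i<k. x i) = s)"
proof -
  let ?B = "map c [0..<k]"
  have "(\<exists>xs. length xs = length ?B \<and> (\<Sum>i<length ?B. ?B ! i * xs ! i) = M \<and>
          (\<Sum>i<length ?B. xs ! i) = s) \<longleftrightarrow>
        (\<exists>x. (\<Sum>i<k. c i * x i) = M \<and> (\<Sum>i<k. x i) = s)" for s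
  proof
    assume "\<exists>xs. length xs = length ?B \<and> (\<Sum>i<length ?B. ?B ! i * xs ! i) = M \<and>
          (\<Sum>i<length ?B. xs ! i) = s"
    then obtain xs where "(\<Sum>i<k. ?B ! i * xs ! i) = M" "(\<Sum>i<k. xs ! i) = s"
      by auto
    moreover have "(\<Sum>i<k. ?B ! i * xs ! i) = (\<Sum>i<k. c i * xs ! i)"
      by (auto intro: sum.cong)
    ultimately show "\<exists>x. (\<Sum>i<k. c i * x i) = M \<and> (\<Sum>i<k. x i) = s"
      by auto
  next
    assume "\<exists>x. (\<Sum>i<k. c i * x i) = M \<and> (\<Sum>i<k. x i) = s"
    then obtain x where "(\<Sum>i<k. c i * x i) = M" "(\<Sum>i<k. x i) = s"
      by blast
    moreover have "(\<Sum>i<k. ?B ! i * map x [0..<k] ! i) = (\<Sum>i<k. c i * x i)"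
      "(\<Sum>i<k. map x [0..<k] ! i) = (\<Sum>i<k. x i)"
      by (auto intro: sum.cong)
    ultimately show "\<exists>xs. length xs = length ?B \<and> (\<Sum>i<length ?B. ?B ! i * xs ! i) = M \<and>
          (\<Sum>i<length ?B. xs ! i) = s"
      by (intro exI[of _ "map x [0..<k]"]) simp
  qed
  then show ?thesis
    unfolding opt_B_def by simp
qed

lemma orderly_map_uptI:
  assumes "c 0 = 1" and "0 < k"
    and "\<And>x. greedy c k (\<Sum>i<k. c i * x i) \<le> (\<Sum>i<k. x i)"
  shows "orderly (map c [0..<k])"
  unfolding orderly_def
proof (intro allI impI)
  fix M :: nat
  have "(LEAST s. \<exists>x. (\<Sum>i<k. c i * x i) = M \<and> (\<Sum>i<k. x i) = s) = greedy c k M"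
  proof (rule Least_equality)
    show "\<exists>x. (\<Sum>i<k. c i * x i) = M \<and> (\<Sum>i<k. x i) = greedy c k M"
      using greedy_representation[of c k, OF assms(1,2)] .
  next
    show "greedy c k M \<le> s" if "\<exists>x. (\<Sum>i<k. c i * x i) = M \<and> (\<Sum>i<k. x i) = s" for s
      using that assms(3) by blast
  qed
  then show "opt_B (map c [0..<k]) M = grd_B (map c [0..<k]) M"
    by (simp add: opt_B_map_upt grd_B_map_upt)
qed

fun repunit :: "nat \<Rightarrow> nat \<Rightarrow> nat" where
  "repunit b 0 = 1"
| "repunit b (Suc i) = b * repunit b i + 1"

lemma repunit_pos: "0 < repunit b i"
  by (cases i) simp_all

lemma diff_one_mult_repunit: "(b - 1) * repunit b i = b ^ (i + 1) - 1"
proof (induction i)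
  case 0
  then show ?case by simp
next
  case (Suc i)
  have "(b - 1) * repunit b (Suc i) = b * ((b - 1) * repunit b i) + (b - 1)"
    by (simp add: algebra_simps)
  also have "\<dots> = b * (b ^ (i + 1) - 1) + (b - 1)"
    by (simp only: Suc.IH)
  also have "\<dots> = b ^ (Suc i + 1) - 1"
  proof (cases "b = 0")
    case False
    then have "b \<le> b ^ (Suc i + 1)"
      by simp
    moreover have "b * (b ^ (i + 1) - 1) = b ^ (Suc i + 1) - b"
      by (simp add: right_diff_distrib')
    ultimately show ?thesis
      using False by linarith
  qed simp
  finally show ?case .
qed

lemma repunit_eq_div:
  assumes "1 < b"
  shows "repunit b i = (b ^ (i + 1) - 1) div (b - 1)"
proof -
  have "repunit b i = (b - 1) * repunit b i div (b - 1)"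
    using assms by simp
  then show ?thesis
    by (simp only: diff_one_mult_repunit)
qed

lemma greedy_repunit_minus_one: "greedy (repunit b) i (repunit b i - 1) \<le> b"
proof (cases i)
  case (Suc i')
  have "repunit b i - 1 = b * repunit b i'"
    by (simp add: Suc)
  then show ?thesis
    using repunit_pos[of b i'] by (simp add: Suc)
qed simp

lemma greedy_repunit_le_Suc:
  "greedy (repunit b) j m \<le> greedy (repunit b) j (Suc m) + (b - 1)"
proof (induction j arbitrary: m)
  case 0
  then show ?case by simp
next
  case (Suc j)
  let ?c = "repunit b j"
  show ?case
  proof (cases "Suc (m mod ?c) = ?c")
    case True
    then have "m mod ?c = ?c - 1"
      by simp
    then have "greedy (repunit b) j (m mod ?c) \<le> b"
      using greedy_repunit_minus_one[of b j] by simp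
    with True show ?thesis
      by (simp add: div_Suc mod_Suc)
  next
    case False
    then show ?thesis
      using Suc.IH[of "m mod ?c"] repunit_pos[of b j] by (simp add: div_Suc mod_Suc)
  qed
qed

lemma greedy_repunit_add_next:
  assumes "0 < b"
  shows "greedy (repunit b) (Suc i) N + 1 \<le> greedy (repunit b) (Suc i) (N + repunit b (Suc i))"
proof -
  let ?G = "greedy (repunit b) (Suc i)" and ?c = "repunit b i"
  have "?G (N + b * ?c) = ?G N + b"
    using repunit_pos[of b i] by simp
  moreover have "?G (N + b * ?c) \<le> ?G (N + repunit b (Suc i)) + (b - 1)"
    using greedy_repunit_le_Suc[of b "Suc i" "N + b * ?c"] by simp
  ultimately show ?thesis
    using assms by linarith
qed

lemma greedy_repunit_add_mult_next:
  assumes "0 < b"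
  shows "greedy (repunit b) (Suc i) N + t \<le> greedy (repunit b) (Suc i) (N + t * repunit b (Suc i))"
proof (induction t)
  case 0
  then show ?case by simp
next
  case (Suc t)
  let ?G = "greedy (repunit b) (Suc i)" and ?c = "repunit b (Suc i)"
  have "?G N + Suc t \<le> ?G (N + t * ?c) + 1"
    using Suc.IH by linarith
  also have "\<dots> \<le> ?G (N + t * ?c + ?c)"
    by (rule greedy_repunit_add_next[OF assms])
  finally show ?case
    by (simp only: mult_Suc add.assoc add.commute[of "t * ?c"])
qed

lemma greedy_repunit_le_sum:
  assumes "0 < b"
  shows "greedy (repunit b) k (\<Sum>i<k. repunit b i * x i) \<le> (\<Sum>i<k. x i)"
proof (induction k)
  case 0
  then show ?case by simp
next
  case (Suc j)
  let ?G = "greedy (repunit b) j" and ?c = "repunit b j"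
  define M' where "M' = (\<Sum>i<j. repunit b i * x i)"
  define M where "M = M' + ?c * x j"
  have "x j \<le> M div ?c"
    using repunit_pos[of b j] by (simp add: M_def less_eq_div_iff_mult_less_eq mult.commute)
  have "?G (M mod ?c) + (M div ?c - x j) \<le> ?G M'"
  proof (cases j)
    case 0
    then show ?thesis
      by (simp add: M_def M'_def)
  next
    case (Suc i)
    have "M div ?c * ?c + M mod ?c = M' + x j * ?c"
      unfolding div_mult_mod_eq by (simp add: M_def mult.commute)
    moreover have "x j * ?c \<le> M div ?c * ?c"
      using \<open>x j \<le> M div ?c\<close> by simp
    ultimately have "M' = M mod ?c + (M div ?c - x j) * ?c"
      by (simp add: diff_mult_distrib)
    then show ?thesis
      using greedy_repunit_add_mult_next[OF assms, of i] Suc by simp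
  qed
  then show ?case
    using Suc.IH \<open>x j \<le> M div ?c\<close> by (simp add: M_def M'_def)
qed

theorem lemma3p1:
  fixes k b :: nat
  assumes "k \<ge> 1" and "b \<ge> 2"
  shows "orderly (map (\<lambda>i. (b ^ (i + 1) - 1) div (b - 1)) [0..<k])"
proof -
  have "(\<lambda>i. (b ^ (i + 1) - 1) div (b - 1)) = repunit b"
    using assms(2) by (simp add: fun_eq_iff repunit_eq_div)
  moreover have "orderly (map (repunit b) [0..<k])"
    using assms greedy_repunit_le_sum[of b k] by (intro orderly_map_uptI) simp_all
  ultimately show ?thesis
    by simp
qed

end
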